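(* Let $Y$ be a Young diagram with row lengths $a_1\ge\cdots\ge a_m\ge0$, let $P$ be a 2-cover of $H(Y)$, and let $Q=P\cap(C\times S)$. Then $$|P|\ge |Q|+\sum_{i=1}^m\nu(a_i,Q).$$
   Context: $H(Y)$ is the hypergraph with vertex sides $R=\{r_1,\dots,r_m\}$, $C=\{c_1,\dots,c_{a_1}\}$, $S=\{s_1,\dots,s_{a_1}\}$ and edges $\{r_i,c_j,s_k\}$ for $1\le i\le m$, $1\le j,k\le a_i$. For disjoint sets $A,B$, $A\times B$ is the set of pairs $\{a,b\}$ with $a\in A,b\in B$. A 2-cover of $H(Y)$ is a set of 2-element vertex sets such that every edge of $H(Y)$ contains a member of it. $\nu(\ell,Q)$ is the matching number of the bipartite graph with sides $\{c_1,\dots,c_\ell\}$, $\{s_1,\dots,s_\ell\}$ and edges $\{c_js_k:1\le j,k\le\ell\}\setminus Q$. *)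

theory Defs
  imports Main
begin

datatype vert = Rv nat | Cv nat | Sv nat

definition col_len :: "nat \<Rightarrow> (nat \<Rightarrow> nat) \<Rightarrow> nat" where
  "col_len m a = (if m = 0 then 0 else a 1)"

definition Rset :: "nat \<Rightarrow> vert set" where
  "Rset m = Rv ` {1..m}"
definition Cset :: "nat \<Rightarrow> (nat \<Rightarrow> nat) \<Rightarrow> vert set" where
  "Cset m a = Cv ` {1..col_len m a}"
definition Sset :: "nat \<Rightarrow> (nat \<Rightarrow> nat) \<Rightarrow> vert set" where
  "Sset m a = Sv ` {1..col_len m a}"

definition HV :: "nat \<Rightarrow> (nat \<Rightarrow> nat) \<Rightarrow> vert set" where
  "HV m a = Rset m \<union> Cset m a \<union> Sset m a"

definition HE :: "nat \<Rightarrow> (nat \<Rightarrow> nat) \<Rightarrow> vert set set" where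
  "HE m a = {{Rv i, Cv j, Sv k} | i j k. 1 \<le> i \<and> i \<le> m \<and> 1 \<le> j \<and> j \<le> a i \<and> 1 \<le> k \<and> k \<le> a i}"

text \<open>A \<times> B for disjoint vertex sets: the set of pairs {a,b}.\<close>
definition pairs_between :: "'v set \<Rightarrow> 'v set \<Rightarrow> 'v set set" where
  "pairs_between A B = {{x, y} | x y. x \<in> A \<and> y \<in> B}"

definition is_2cover :: "nat \<Rightarrow> (nat \<Rightarrow> nat) \<Rightarrow> vert set set \<Rightarrow> bool" where
  "is_2cover m a P \<longleftrightarrow> (\<forall>p\<in>P. p \<subseteq> HV m a \<and> card p = 2) \<and> (\<forall>e\<in>HE m a. \<exists>p\<in>P. p \<subseteq> e)"

definition bip_edges :: "nat \<Rightarrow> vert set set \<Rightarrow> vert set set" where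
  "bip_edges l Q = {{Cv j, Sv k} | j k. 1 \<le> j \<and> j \<le> l \<and> 1 \<le> k \<and> k \<le> l} - Q"

definition is_matching :: "'v set set \<Rightarrow> bool" where
  "is_matching M \<longleftrightarrow> (\<forall>e\<in>M. \<forall>e'\<in>M. e \<noteq> e' \<longrightarrow> e \<inter> e' = {})"

text \<open>nu l Q: matching number of K_{l,l} on c_1..c_l, s_1..s_l with the edges in Q removed.\<close>
definition nu :: "nat \<Rightarrow> vert set set \<Rightarrow> nat" where
  "nu l Q = Max {card M | M. M \<subseteq> bip_edges l Q \<and> is_matching M}"

end

theory Submission
  imports Defs
begin

text \<open>Call the pairs of P joining r_i to a vertex of C \<union> S the row pairs of r_i. As all
  members of P have two elements, row pairs of different rows are disjoint, and no row pair lies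
  in Q = P \<inter> (C \<times> S). Take a maximum matching M of K_{a_i,a_i} - Q. An edge c_j s_k of M is
  not in P, so the hyperedge {r_i, c_j, s_k} is covered by a row pair of r_i inside it, and
  disjoint matching edges need distinct such pairs. Hence r_i has at least nu(a_i, Q) row pairs,
  and summing over the rows gives the bound.\<close>

lemma card_2_not_subset_singleton:
  assumes "card p = 2" shows "\<not> p \<subseteq> {x}"
  using assms by (auto simp: card_2_iff)

lemma finite_bip_edges: "finite (bip_edges l Q)"
proof -
  have "bip_edges l Q \<subseteq> (\<lambda>(j, k). {Cv j, Sv k}) ` ({1..l} \<times> {1..l})"
    unfolding bip_edges_def by auto
  then show ?thesis by (rule finite_subset) auto
qed

lemma nu_attained: "\<exists>M. M \<subseteq> bip_edges l Q \<and> is_matching M \<and> card M = nu l Q"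
proof -
  let ?S = "{card M | M. M \<subseteq> bip_edges l Q \<and> is_matching M}"
  have "?S \<subseteq> card ` Pow (bip_edges l Q)" by auto
  then have "finite ?S"
    using finite_bip_edges by (meson finite_Pow_iff finite_imageI finite_subset)
  moreover have "0 \<in> ?S" unfolding is_matching_def by force
  ultimately have "Max ?S \<in> ?S" by (intro Max_in) auto
  then show ?thesis unfolding nu_def by auto
qed

lemma finite_HV: "finite (HV m a)"
  unfolding HV_def Rset_def Cset_def Sset_def by auto

lemma finite_if_is_2cover: "is_2cover m a P \<Longrightarrow> finite P"
  using finite_HV unfolding is_2cover_def by (meson PowI finite_Pow_iff finite_subset subsetI)

lemma card_eq_2_if_is_2cover: "is_2cover m a P \<Longrightarrow> p \<in> P \<Longrightarrow> card p = 2"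
  unfolding is_2cover_def by auto

definition row_pairs :: "vert set set \<Rightarrow> nat \<Rightarrow> vert set set" where
  "row_pairs P i = {p \<in> P. Rv i \<in> p \<and> (\<exists>j. Cv j \<in> p \<or> Sv j \<in> p)}"

lemma finite_row_pairs: "finite P \<Longrightarrow> finite (row_pairs P i)"
  unfolding row_pairs_def by auto

lemma row_pairs_disjoint:
  assumes "\<And>p. p \<in> P \<Longrightarrow> card p = 2" and "i \<noteq> i'"
  shows "row_pairs P i \<inter> row_pairs P i' = {}"
proof (rule ccontr)
  assume "row_pairs P i \<inter> row_pairs P i' \<noteq> {}"
  then obtain p x where p: "p \<in> P" "{Rv i, Rv i', x} \<subseteq> p" and x: "x \<notin> {Rv i, Rv i'}"
    unfolding row_pairs_def by blast
  have "card {Rv i, Rv i', x} = 3" using x \<open>i \<noteq> i'\<close> by auto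
  moreover have "card {Rv i, Rv i', x} \<le> card p"
    using p assms(1) by (intro card_mono) (auto intro: card_ge_0_finite)
  ultimately show False using assms(1)[OF p(1)] by simp
qed

lemma row_pairs_disjoint_pairs_between:
  "pairs_between (Cset m a) (Sset m a) \<inter> row_pairs P i = {}"
  unfolding row_pairs_def pairs_between_def Cset_def Sset_def by auto

lemma row_pair_covering:
  assumes cover: "is_2cover m a P" and i: "1 \<le> i" "i \<le> m" and ai: "a i \<le> col_len m a"
    and j: "1 \<le> j" "j \<le> a i" and k: "1 \<le> k" "k \<le> a i"
    and notQ: "{Cv j, Sv k} \<notin> P \<inter> pairs_between (Cset m a) (Sset m a)"
  shows "\<exists>p \<in> row_pairs P i. p \<subseteq> {Rv i, Cv j, Sv k}"
proof -
  have "{Rv i, Cv j, Sv k} \<in> HE m a" unfolding HE_def using i j k by blast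
  then obtain p where p: "p \<in> P" "p \<subseteq> {Rv i, Cv j, Sv k}"
    using cover unfolding is_2cover_def by blast
  have p2: "card p = 2" using card_eq_2_if_is_2cover[OF cover p(1)] .
  have "{Cv j, Sv k} \<in> pairs_between (Cset m a) (Sset m a)"
  proof -
    have "Cv j \<in> Cset m a" "Sv k \<in> Sset m a" unfolding Cset_def Sset_def using j k ai by auto
    then show ?thesis unfolding pairs_between_def by blast
  qed
  then have "p \<noteq> {Cv j, Sv k}" using notQ p(1) by auto
  then have "Rv i \<in> p"
    using p p2 card_subset_eq[of "{Cv j, Sv k}" p] by auto
  moreover have "\<not> p \<subseteq> {Rv i}" using card_2_not_subset_singleton[OF p2] .
  ultimately have "p \<in> row_pairs P i" unfolding row_pairs_def using p by blast
  with p(2) show ?thesis by blast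
qed

lemma nu_le_card_row_pairs:
  assumes cover: "is_2cover m a P" and i: "1 \<le> i" "i \<le> m" and ai: "a i \<le> col_len m a"
  shows "nu (a i) (P \<inter> pairs_between (Cset m a) (Sset m a)) \<le> card (row_pairs P i)"
proof -
  let ?Q = "P \<inter> pairs_between (Cset m a) (Sset m a)"
  obtain M where M: "M \<subseteq> bip_edges (a i) ?Q" "is_matching M" "card M = nu (a i) ?Q"
    using nu_attained by blast
  have "\<forall>e \<in> M. \<exists>p \<in> row_pairs P i. p \<subseteq> insert (Rv i) e"
  proof
    fix e assume "e \<in> M"
    then obtain j k where "e = {Cv j, Sv k}" "1 \<le> j" "j \<le> a i" "1 \<le> k" "k \<le> a i" "e \<notin> ?Q"
      using M(1) unfolding bip_edges_def by blast
    then show "\<exists>p \<in> row_pairs P i. p \<subseteq> insert (Rv i) e"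
      using row_pair_covering[OF cover i ai] by auto
  qed
  then obtain g where g: "\<And>e. e \<in> M \<Longrightarrow> g e \<in> row_pairs P i \<and> g e \<subseteq> insert (Rv i) e"
    by metis
  have "inj_on g M"
  proof
    fix e e' assume ee: "e \<in> M" "e' \<in> M" "g e = g e'"
    show "e = e'"
    proof (rule ccontr)
      assume "e \<noteq> e'"
      then have "e \<inter> e' = {}" using M(2) ee(1,2) unfolding is_matching_def by blast
      then have sub: "g e \<subseteq> {Rv i}" using g[OF ee(1)] g[OF ee(2)] ee(3) by blast
      have "g e \<in> P" using g[OF ee(1)] unfolding row_pairs_def by blast
      then have "card (g e) = 2" by (rule card_eq_2_if_is_2cover[OF cover])
      from card_2_not_subset_singleton[OF this] sub show False by contradiction
    qed
  qed
  moreover have "g ` M \<subseteq> row_pairs P i" using g by auto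
  ultimately have "card M \<le> card (row_pairs P i)"
    using finite_row_pairs[OF finite_if_is_2cover[OF cover]] by (rule card_inj_on_le)
  then show ?thesis using M(3) by simp
qed

theorem corollary2:
  fixes m :: nat and a :: "nat \<Rightarrow> nat" and P :: "vert set set"
  assumes young: "\<And>i j. 1 \<le> i \<Longrightarrow> i \<le> j \<Longrightarrow> j \<le> m \<Longrightarrow> a j \<le> a i"
    and cover: "is_2cover m a P"
  shows "card P \<ge> card (P \<inter> pairs_between (Cset m a) (Sset m a))
           + (\<Sum>i=1..m. nu (a i) (P \<inter> pairs_between (Cset m a) (Sset m a)))"
proof -
  let ?Q = "P \<inter> pairs_between (Cset m a) (Sset m a)"
  let ?R = "\<Union>i\<in>{1..m}. row_pairs P i"
  have finP: "finite P" using finite_if_is_2cover[OF cover] .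
  have "(\<Sum>i=1..m. nu (a i) ?Q) \<le> (\<Sum>i=1..m. card (row_pairs P i))"
  proof (rule sum_mono)
    fix i assume i: "i \<in> {1..m}"
    then have "a i \<le> col_len m a" using young[of 1 i] unfolding col_len_def by auto
    then show "nu (a i) ?Q \<le> card (row_pairs P i)" using nu_le_card_row_pairs[OF cover] i by auto
  qed
  also have "\<dots> = card ?R"
    using finite_row_pairs[OF finP] row_pairs_disjoint card_eq_2_if_is_2cover[OF cover]
    by (intro card_UN_disjoint[symmetric]) auto
  finally have "card ?Q + (\<Sum>i=1..m. nu (a i) ?Q) \<le> card ?Q + card ?R" by simp
  also have "\<dots> = card (?Q \<union> ?R)"
  proof (intro card_Un_disjoint[symmetric])
    show "?Q \<inter> ?R = {}" using row_pairs_disjoint_pairs_between[of m a P] by blast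
  qed (use finP finite_row_pairs[OF finP] in auto)
  also have "\<dots> \<le> card P"
    using finP unfolding row_pairs_def by (intro card_mono) auto
  finally show ?thesis .
qed

end
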